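(* Let $(E,P,\vartheta)$ be a complete bipolar metric space and let $F\colon E\cup P\to E\cup P$ with $F(E)\subseteq E$, $F(P)\subseteq P$ be a polynomial contraction, i.e. there exist $\pi\in(0,1)$, an integer $\sigma\geq1$ and functions $q_\upsilon\colon E\times P\to[0,\infty)$, $\upsilon=0,\dots,\sigma$, such that $$\sum_{\upsilon=0}^{\sigma} q_\upsilon(Fe,Ff)\,\vartheta^\upsilon(Fe,Ff)\leq \pi\sum_{\upsilon=0}^{\sigma} q_\upsilon(e,f)\,\vartheta^\upsilon(e,f)\quad\text{for all } e\in E,\ f\in P.$$ Assume (i) $q_0\equiv 0$; (ii) for every $\upsilon\in\{1,\dots,\sigma\}$ there is $W_\upsilon>0$ with $q_\upsilon(e,f)\leq W_\upsilon$ for all $e\in E$, $f\in P$; (iii) there exist $\varrho\in\{1,\dots,\sigma\}$ and $Q_\varrho>0$ with $q_\varrho(e,f)\geq Q_\varrho$ for all $e\in E$, $f\in P$. Then $F$ has a unique fixed point.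
   Context: A bipolar metric space is a triple $(E,P,\vartheta)$ where $E,P$ are nonempty sets and $\vartheta\colon E\times P\to[0,\infty)$ satisfies: (1) for $e\in E$, $f\in P$, $\vartheta(e,f)=0$ iff $e=f$; (2) $\vartheta(e,f)=\vartheta(f,e)$ whenever $e,f\in E\cap P$; (3) $\vartheta(e,f)\leq\vartheta(e,z)+\vartheta(r,z)+\vartheta(r,f)$ for all $e,r\in E$, $z,f\in P$. A sequence $(x_n)$ in $E$ converges to $y\in P$ if $\vartheta(x_n,y)\to0$; a sequence $(y_n)$ in $P$ converges to $x\in E$ if $\vartheta(x,y_n)\to0$. A bisequence $(x_n,y_n)$ with $x_n\in E$, $y_n\in P$ is Cauchy if for every $\varepsilon>0$ there is $N$ with $\vartheta(x_n,y_m)<\varepsilon$ for all $n,m\geq N$; the space is complete if every Cauchy bisequence is convergent (both component sequences converge). $\vartheta^\upsilon$ denotes the $\upsilon$-th power of $\vartheta$, with $\vartheta^0\equiv1$. A fixed point of $F$ is a point $g$ with $Fg=g$. *)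

theory Defs
  imports Complex_Main
begin

text \<open>Bipolar metric space (E,P,d): E, P nonempty subsets of a common ambient type,
  d only meaningful on E x P.\<close>
definition bipolar_metric :: "'a set \<Rightarrow> 'a set \<Rightarrow> ('a \<Rightarrow> 'a \<Rightarrow> real) \<Rightarrow> bool" where
  "bipolar_metric E P d \<longleftrightarrow>
     E \<noteq> {} \<and> P \<noteq> {} \<and>
     (\<forall>e\<in>E. \<forall>f\<in>P. d e f \<ge> 0) \<and>
     (\<forall>e\<in>E. \<forall>f\<in>P. d e f = 0 \<longleftrightarrow> e = f) \<and>
     (\<forall>e\<in>E \<inter> P. \<forall>f\<in>E \<inter> P. d e f = d f e) \<and>
     (\<forall>e\<in>E. \<forall>r\<in>E. \<forall>z\<in>P. \<forall>f\<in>P. d e f \<le> d e z + d r z + d r f)"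

definition left_conv :: "('a \<Rightarrow> 'a \<Rightarrow> real) \<Rightarrow> (nat \<Rightarrow> 'a) \<Rightarrow> 'a \<Rightarrow> bool" where
  "left_conv d x y \<longleftrightarrow> (\<lambda>n. d (x n) y) \<longlonglongrightarrow> 0"

definition right_conv :: "('a \<Rightarrow> 'a \<Rightarrow> real) \<Rightarrow> (nat \<Rightarrow> 'a) \<Rightarrow> 'a \<Rightarrow> bool" where
  "right_conv d y x \<longleftrightarrow> (\<lambda>n. d x (y n)) \<longlonglongrightarrow> 0"

definition cauchy_biseq :: "'a set \<Rightarrow> 'a set \<Rightarrow> ('a \<Rightarrow> 'a \<Rightarrow> real) \<Rightarrow> (nat \<Rightarrow> 'a) \<Rightarrow> (nat \<Rightarrow> 'a) \<Rightarrow> bool" where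
  "cauchy_biseq E P d x y \<longleftrightarrow>
     (\<forall>n. x n \<in> E) \<and> (\<forall>n. y n \<in> P) \<and>
     (\<forall>\<epsilon>>0. \<exists>N. \<forall>n\<ge>N. \<forall>m\<ge>N. d (x n) (y m) < \<epsilon>)"

definition complete_bipolar :: "'a set \<Rightarrow> 'a set \<Rightarrow> ('a \<Rightarrow> 'a \<Rightarrow> real) \<Rightarrow> bool" where
  "complete_bipolar E P d \<longleftrightarrow> bipolar_metric E P d \<and>
     (\<forall>x y. cauchy_biseq E P d x y \<longrightarrow>
        (\<exists>v\<in>P. left_conv d x v) \<and> (\<exists>u\<in>E. right_conv d y u))"

end

theory Submission
  imports Defs
begin

text \<open>Write \<open>\<Phi>(e,f) = \<Sum>\<^sub>\<upsilon> q\<^sub>\<upsilon>(e,f) \<vartheta>(e,f)\<^sup>\<upsilon>\<close>. The lower bound on \<open>q\<^sub>\<rho>\<close> gives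
  \<open>\<vartheta> \<le> (\<Phi>/Q)\<^bsup>1/\<rho>\<^esup>\<close>, so contracting \<open>\<Phi>\<close> by \<open>\<pi>\<close> shrinks the distance between the
  \<open>n\<close>-th iterates like \<open>(\<pi>\<^bsup>1/\<rho>\<^esup>)\<^sup>n\<close>; the orbits of any \<open>e \<in> E\<close>, \<open>f \<in> P\<close> therefore form a
  Cauchy bisequence, whose two limits coincide. Since \<open>q\<^sub>0 = 0\<close> and the \<open>q\<^sub>\<upsilon>\<close> are bounded,
  \<open>\<Phi>(e,f) \<rightarrow> 0\<close> as \<open>\<vartheta>(e,f) \<rightarrow> 0\<close>, which makes \<open>F\<close> continuous and the common limit a fixed
  point. Two fixed points \<open>e, f\<close> satisfy \<open>\<Phi>(e,f) \<le> \<pi> \<Phi>(e,f)\<close>, hence \<open>\<vartheta>(e,f) = 0\<close>.\<close>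

lemma bipolar_metric_nonneg:
  "bipolar_metric E P d \<Longrightarrow> e \<in> E \<Longrightarrow> f \<in> P \<Longrightarrow> 0 \<le> d e f"
  unfolding bipolar_metric_def by blast

lemma bipolar_metric_eq_0_iff:
  "bipolar_metric E P d \<Longrightarrow> e \<in> E \<Longrightarrow> f \<in> P \<Longrightarrow> d e f = 0 \<longleftrightarrow> e = f"
  unfolding bipolar_metric_def by blast

lemma bipolar_metric_triangle:
  "bipolar_metric E P d \<Longrightarrow> e \<in> E \<Longrightarrow> r \<in> E \<Longrightarrow> z \<in> P \<Longrightarrow> f \<in> P \<Longrightarrow>
    d e f \<le> d e z + d r z + d r f"
  unfolding bipolar_metric_def by blast

lemma bipolar_metric_eq_if_tendsto:
  assumes bip: "bipolar_metric E P d"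
    and "u \<in> E" "v \<in> P" "\<And>n. x n \<in> E" "\<And>n. y n \<in> P"
    and "(\<lambda>n. d u (y n)) \<longlonglongrightarrow> 0" "(\<lambda>n. d (x n) (y n)) \<longlonglongrightarrow> 0" "(\<lambda>n. d (x n) v) \<longlonglongrightarrow> 0"
  shows "u = v"
proof -
  have "d u v \<le> 0"
  proof (rule LIMSEQ_le)
    show "(\<lambda>n. d u (y n) + d (x n) (y n) + d (x n) v) \<longlonglongrightarrow> 0"
      using assms(6-8) by (auto intro: tendsto_add_zero)
    show "\<exists>N. \<forall>n\<ge>N. d u v \<le> d u (y n) + d (x n) (y n) + d (x n) v"
      using bipolar_metric_triangle[OF bip] assms(2-5) by blast
  qed simp
  then show ?thesis
    using bipolar_metric_nonneg[OF bip] bipolar_metric_eq_0_iff[OF bip] assms(2,3) by force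
qed

lemma cauchy_biseqI_bound:
  assumes "\<And>n. x n \<in> E" "\<And>n. y n \<in> P"
    and bound: "\<And>n m. d (x n) (y m) \<le> B (min n m)" and "B \<longlonglongrightarrow> 0"
  shows "cauchy_biseq E P d x y"
  unfolding cauchy_biseq_def
proof (intro conjI allI impI)
  fix \<epsilon> :: real
  assume "\<epsilon> > 0"
  then obtain N where "\<forall>n\<ge>N. B n < \<epsilon>"
    using order_tendstoD(2)[OF \<open>B \<longlonglongrightarrow> 0\<close>] by (auto simp: eventually_sequentially)
  then show "\<exists>N. \<forall>n\<ge>N. \<forall>m\<ge>N. d (x n) (y m) < \<epsilon>"
    using bound by (meson le_less_trans min.boundedI)
qed (use assms in auto)

lemma sum_power_shift_le:
  fixes r :: real
  assumes "0 \<le> r" "r < 1"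
  shows "(\<Sum>k<j. r ^ (n + k)) \<le> r ^ n / (1 - r)"
proof -
  have "(\<Sum>k<j. r ^ (n + k)) = r ^ n * (\<Sum>k<j. r ^ k)"
    by (simp add: power_add sum_distrib_left)
  also have "\<dots> = r ^ n * ((1 - r ^ j) / (1 - r))"
    using assms sum_gp_strict[of r j] by simp
  also have "\<dots> \<le> r ^ n * (1 / (1 - r))"
    using assms by (intro mult_left_mono divide_right_mono) auto
  finally show ?thesis by simp
qed

lemma bipolar_dist_le_geometric:
  assumes bip: "bipolar_metric E P d"
    and xE: "\<And>n. x n \<in> E" and yP: "\<And>n. y n \<in> P" and r: "0 \<le> r" "r < 1"
    and diag: "\<And>k. d (x k) (y k) \<le> K * r ^ k"
    and step: "\<And>k. d (x (Suc k)) (y k) \<le> K * r ^ k"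
  shows "d (x n) (y m) \<le> 3 * K * r ^ min n m / (1 - r)"
proof -
  note tri = bipolar_metric_triangle[OF bip xE xE yP yP]
  have K: "0 \<le> K"
    using diag[of 0] bipolar_metric_nonneg[OF bip xE yP, of 0 0] by simp
  have next_le: "K * r ^ Suc k \<le> K * r ^ k" for k
    using K r by (intro mult_left_mono power_decreasing) auto
  define D where "D n j = K * r ^ n + 2 * K * (\<Sum>k<j. r ^ (n + k))" for n j
  have right: "d (x n) (y (n + j)) \<le> D n j" for n j
  proof (induction j)
    case (Suc j)
    have "d (x n) (y (n + Suc j))
        \<le> d (x n) (y (n + j)) + d (x (Suc (n + j))) (y (n + j)) + d (x (Suc (n + j))) (y (Suc (n + j)))"
      using tri by simp
    also have "\<dots> \<le> D n (Suc j)"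
      using Suc step[of "n + j"] diag[of "Suc (n + j)"] next_le[of "n + j"]
      by (simp add: D_def algebra_simps)
    finally show ?case .
  qed (simp add: D_def diag)
  have left: "d (x (n + j)) (y n) \<le> D n j" for n j
  proof (induction j)
    case (Suc j)
    have "d (x (n + Suc j)) (y n)
        \<le> d (x (Suc (n + j))) (y (n + j)) + d (x (n + j)) (y (n + j)) + d (x (n + j)) (y n)"
      using tri by simp
    also have "\<dots> \<le> D n (Suc j)"
      using Suc step[of "n + j"] diag[of "n + j"] by (simp add: D_def algebra_simps)
    finally show ?case .
  qed (simp add: D_def diag)
  have D_le: "D n j \<le> 3 * K * r ^ n / (1 - r)" for n j
  proof -
    have "K * r ^ n \<le> K * r ^ n / (1 - r)"
      using K r by (simp add: field_simps)
    moreover have "2 * K * (\<Sum>k<j. r ^ (n + k)) \<le> 2 * K * (r ^ n / (1 - r))"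
      using K sum_power_shift_le[OF r] by (intro mult_left_mono) auto
    moreover have "3 * K * r ^ n / (1 - r) = K * r ^ n / (1 - r) + 2 * K * (r ^ n / (1 - r))"
      by (simp add: field_simps)
    ultimately show ?thesis
      unfolding D_def by linarith
  qed
  show ?thesis
  proof (cases "n \<le> m")
    case True
    then obtain j where "m = n + j" using le_Suc_ex by blast
    then show ?thesis using right[of n j] D_le[of n j] True by simp
  next
    case False
    then obtain j where "n = m + j" using le_Suc_ex[of m n] by auto
    then show ?thesis using left[of m j] D_le[of m j] False by simp
  qed
qed

lemma cauchy_biseq_geometric:
  assumes "bipolar_metric E P d"
    and "\<And>n. x n \<in> E" "\<And>n. y n \<in> P" "0 \<le> r" "r < 1"
    and "\<And>k. d (x k) (y k) \<le> K * r ^ k" "\<And>k. d (x (Suc k)) (y k) \<le> K * r ^ k"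
  shows "cauchy_biseq E P d x y"
proof (rule cauchy_biseqI_bound)
  show "(\<lambda>n. 3 * K * r ^ n / (1 - r)) \<longlonglongrightarrow> 0"
    using LIMSEQ_power_zero[of r] assms(4,5) by (auto intro!: tendsto_eq_intros)
qed (use assms bipolar_dist_le_geometric[OF assms] in auto)

definition poly_dist :: "nat \<Rightarrow> (nat \<Rightarrow> 'a \<Rightarrow> 'a \<Rightarrow> real) \<Rightarrow> ('a \<Rightarrow> 'a \<Rightarrow> real) \<Rightarrow> 'a \<Rightarrow> 'a \<Rightarrow> real"
  where "poly_dist \<sigma> q d e f = (\<Sum>v=0..\<sigma>. q v e f * d e f ^ v)"

locale polynomial_contraction =
  fixes E P :: "'a set" and d :: "'a \<Rightarrow> 'a \<Rightarrow> real" and F :: "'a \<Rightarrow> 'a"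
    and \<pi> :: real and \<sigma> :: nat and q :: "nat \<Rightarrow> 'a \<Rightarrow> 'a \<Rightarrow> real"
    and W :: "nat \<Rightarrow> real" and \<rho> :: nat and Q :: real
  assumes complete: "complete_bipolar E P d"
    and maps_E: "F ` E \<subseteq> E" and maps_P: "F ` P \<subseteq> P"
    and pi: "0 \<le> \<pi>" "\<pi> < 1"
    and q_nonneg: "\<And>v e f. v \<le> \<sigma> \<Longrightarrow> e \<in> E \<Longrightarrow> f \<in> P \<Longrightarrow> 0 \<le> q v e f"
    and contraction: "\<And>e f. e \<in> E \<Longrightarrow> f \<in> P \<Longrightarrow>
      poly_dist \<sigma> q d (F e) (F f) \<le> \<pi> * poly_dist \<sigma> q d e f"
    and q_zero: "\<And>e f. e \<in> E \<Longrightarrow> f \<in> P \<Longrightarrow> q 0 e f = 0"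
    and q_upper: "\<And>v e f. v \<in> {1..\<sigma>} \<Longrightarrow> e \<in> E \<Longrightarrow> f \<in> P \<Longrightarrow> q v e f \<le> W v"
    and rho: "\<rho> \<in> {1..\<sigma>}" and Q: "0 < Q"
    and q_lower: "\<And>e f. e \<in> E \<Longrightarrow> f \<in> P \<Longrightarrow> Q \<le> q \<rho> e f"
begin

abbreviation \<Phi> :: "'a \<Rightarrow> 'a \<Rightarrow> real" where "\<Phi> \<equiv> poly_dist \<sigma> q d"

lemma is_bipolar_metric: "bipolar_metric E P d"
  using complete unfolding complete_bipolar_def by blast

lemmas dist_nonneg = bipolar_metric_nonneg[OF is_bipolar_metric]

lemma rho_pos: "0 < \<rho>"
  using rho by auto

lemma iterate_in_E: "e \<in> E \<Longrightarrow> (F ^^ n) e \<in> E"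
  using maps_E by (induction n) auto

lemma iterate_in_P: "f \<in> P \<Longrightarrow> (F ^^ n) f \<in> P"
  using maps_P by (induction n) auto

lemma poly_dist_nonneg: "e \<in> E \<Longrightarrow> f \<in> P \<Longrightarrow> 0 \<le> \<Phi> e f"
  unfolding poly_dist_def using q_nonneg dist_nonneg by (intro sum_nonneg) auto

lemma poly_dist_le_upper:
  assumes "e \<in> E" "f \<in> P"
  shows "\<Phi> e f \<le> (\<Sum>v=1..\<sigma>. W v * d e f ^ v)"
proof -
  have "\<Phi> e f = (\<Sum>v=1..\<sigma>. q v e f * d e f ^ v)"
    unfolding poly_dist_def using q_zero assms by (simp add: sum.atLeast_Suc_atMost)
  also have "\<dots> \<le> (\<Sum>v=1..\<sigma>. W v * d e f ^ v)"
    using q_upper dist_nonneg assms by (intro sum_mono mult_right_mono) auto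
  finally show ?thesis .
qed

lemma dist_le_root_poly_dist:
  assumes "e \<in> E" "f \<in> P"
  shows "d e f \<le> root \<rho> (\<Phi> e f / Q)"
proof -
  have "Q * d e f ^ \<rho> \<le> q \<rho> e f * d e f ^ \<rho>"
    using q_lower dist_nonneg assms by (intro mult_right_mono) auto
  also have "\<dots> \<le> \<Phi> e f"
    unfolding poly_dist_def using rho q_nonneg dist_nonneg assms by (intro member_le_sum) auto
  finally have "d e f ^ \<rho> \<le> \<Phi> e f / Q"
    using Q by (simp add: field_simps)
  then show ?thesis
    using rho_pos real_root_power_cancel[OF rho_pos dist_nonneg[OF assms]] by (metis real_root_le_iff)
qed

lemma poly_dist_iterate_le:
  assumes "e \<in> E" "f \<in> P"
  shows "\<Phi> ((F ^^ n) e) ((F ^^ n) f) \<le> \<pi> ^ n * \<Phi> e f"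
proof (induction n)
  case (Suc n)
  have "\<Phi> ((F ^^ Suc n) e) ((F ^^ Suc n) f) \<le> \<pi> * \<Phi> ((F ^^ n) e) ((F ^^ n) f)"
    using contraction iterate_in_E iterate_in_P assms by simp
  also have "\<dots> \<le> \<pi> * (\<pi> ^ n * \<Phi> e f)"
    using Suc pi by (intro mult_left_mono) auto
  finally show ?case by simp
qed simp

lemma dist_iterate_le:
  assumes "e \<in> E" "f \<in> P"
  shows "d ((F ^^ n) e) ((F ^^ n) f) \<le> root \<rho> (\<Phi> e f / Q) * root \<rho> \<pi> ^ n"
proof -
  have "d ((F ^^ n) e) ((F ^^ n) f) \<le> root \<rho> (\<Phi> ((F ^^ n) e) ((F ^^ n) f) / Q)"
    using dist_le_root_poly_dist iterate_in_E iterate_in_P assms by blast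
  also have "\<dots> \<le> root \<rho> (\<Phi> e f / Q * \<pi> ^ n)"
    using poly_dist_iterate_le[OF assms] rho_pos Q by (simp add: divide_right_mono mult.commute)
  also have "\<dots> = root \<rho> (\<Phi> e f / Q) * root \<rho> \<pi> ^ n"
    by (simp only: real_root_mult real_root_power[OF rho_pos])
  finally show ?thesis .
qed

lemma root_pi: "0 \<le> root \<rho> \<pi>" "root \<rho> \<pi> < 1"
  using pi rho_pos by auto

lemma orbit_cauchy:
  assumes "e \<in> E" "f \<in> P"
  shows "cauchy_biseq E P d (\<lambda>n. (F ^^ n) e) (\<lambda>n. (F ^^ n) f)"
proof (rule cauchy_biseq_geometric[OF is_bipolar_metric _ _ root_pi])
  define K where "K = max (root \<rho> (\<Phi> e f / Q)) (root \<rho> (\<Phi> (F e) f / Q))"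
  have "F e \<in> E" using maps_E assms by blast
  have le_K: "c * root \<rho> \<pi> ^ k \<le> K * root \<rho> \<pi> ^ k" if "c \<le> K" for c k
    using that root_pi by (intro mult_right_mono) auto
  show "d ((F ^^ k) e) ((F ^^ k) f) \<le> K * root \<rho> \<pi> ^ k" for k
    using dist_iterate_le[OF assms, of k] le_K[of _ k] unfolding K_def
    by (meson max.cobounded1 order_trans)
  show "d ((F ^^ Suc k) e) ((F ^^ k) f) \<le> K * root \<rho> \<pi> ^ k" for k
    using dist_iterate_le[OF \<open>F e \<in> E\<close> \<open>f \<in> P\<close>, of k] le_K[of _ k]
    unfolding K_def funpow_Suc_right o_apply by (meson max.cobounded2 order_trans)
qed (use assms iterate_in_E iterate_in_P in auto)

lemma orbit_dist_tendsto_zero: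
  assumes "e \<in> E" "f \<in> P"
  shows "(\<lambda>n. d ((F ^^ n) e) ((F ^^ n) f)) \<longlonglongrightarrow> 0"
proof (rule tendsto_sandwich[OF _ _ tendsto_const])
  show "(\<lambda>n. root \<rho> (\<Phi> e f / Q) * root \<rho> \<pi> ^ n) \<longlonglongrightarrow> 0"
    by (intro tendsto_mult_right_zero LIMSEQ_power_zero) (use root_pi in auto)
qed (use assms dist_nonneg iterate_in_E iterate_in_P dist_iterate_le in auto)

lemma dist_image_tendsto_zero:
  assumes "g \<in> E" "\<And>n. y n \<in> P" "(\<lambda>n. d g (y n)) \<longlonglongrightarrow> 0"
  shows "(\<lambda>n. d (F g) (F (y n))) \<longlonglongrightarrow> 0"
proof (rule tendsto_sandwich[OF _ _ tendsto_const])
  define B where "B t = root \<rho> (\<pi> * (\<Sum>v=1..\<sigma>. W v * t ^ v) / Q)" for t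
  have "(\<lambda>n. B (d g (y n))) \<longlonglongrightarrow> B 0"
    unfolding B_def using assms(3) Q by (intro tendsto_intros) auto
  then show "(\<lambda>n. B (d g (y n))) \<longlonglongrightarrow> 0"
    by (simp add: B_def)
  have "d (F g) (F (y n)) \<le> B (d g (y n))" for n
  proof -
    have FgE: "F g \<in> E" and FyP: "F (y n) \<in> P"
      using maps_E maps_P assms by auto
    have "\<Phi> (F g) (F (y n)) \<le> \<pi> * (\<Sum>v=1..\<sigma>. W v * d g (y n) ^ v)"
      using contraction[OF assms(1,2)] poly_dist_le_upper[OF assms(1,2)] pi
      by (meson mult_left_mono order_trans)
    then have "root \<rho> (\<Phi> (F g) (F (y n)) / Q) \<le> B (d g (y n))"
      unfolding B_def using Q rho_pos by (simp add: divide_right_mono)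
    then show ?thesis
      using dist_le_root_poly_dist[OF FgE FyP] by linarith
  qed
  then show "\<forall>\<^sub>F n in sequentially. d (F g) (F (y n)) \<le> B (d g (y n))"
    by simp
  show "\<forall>\<^sub>F n in sequentially. 0 \<le> d (F g) (F (y n))"
    using assms maps_E maps_P dist_nonneg by (simp add: image_subset_iff)
qed

theorem fixed_point_exists: "\<exists>g \<in> E \<inter> P. F g = g"
proof -
  obtain e f where ef: "e \<in> E" "f \<in> P"
    using is_bipolar_metric unfolding bipolar_metric_def by blast
  define x where "x n = (F ^^ n) e" for n
  define y where "y n = (F ^^ n) f" for n
  have xE: "x n \<in> E" and yP: "y n \<in> P" for n
    unfolding x_def y_def using ef iterate_in_E iterate_in_P by auto
  obtain v u where v: "v \<in> P" "(\<lambda>n. d (x n) v) \<longlonglongrightarrow> 0"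
    and u: "u \<in> E" "(\<lambda>n. d u (y n)) \<longlonglongrightarrow> 0"
    using complete orbit_cauchy[OF ef]
    unfolding complete_bipolar_def left_conv_def right_conv_def x_def y_def by blast
  have xy: "(\<lambda>n. d (x n) (y n)) \<longlonglongrightarrow> 0"
    unfolding x_def y_def using orbit_dist_tendsto_zero[OF ef] .
  have "u = v"
    using bipolar_metric_eq_if_tendsto[OF is_bipolar_metric u(1) v(1) xE yP u(2) xy v(2)] .
  have "u \<in> P"
    using v(1) \<open>u = v\<close> by simp
  have "F u = u"
  proof (rule bipolar_metric_eq_if_tendsto[OF is_bipolar_metric _ \<open>u \<in> P\<close> xE yP])
    show "F u \<in> E" using maps_E u(1) by blast
    show "(\<lambda>n. d (F u) (y (Suc n))) \<longlonglongrightarrow> 0"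
      using dist_image_tendsto_zero[OF u(1) yP u(2)] by (simp add: y_def)
    show "(\<lambda>n. d (x (Suc n)) (y (Suc n))) \<longlonglongrightarrow> 0"
      using LIMSEQ_Suc[OF xy] .
    show "(\<lambda>n. d (x (Suc n)) u) \<longlonglongrightarrow> 0"
      using LIMSEQ_Suc[OF v(2)] \<open>u = v\<close> by simp
  qed
  then show ?thesis
    using u(1) \<open>u \<in> P\<close> by blast
qed

lemma fixed_points_eq:
  assumes "e \<in> E" "f \<in> P" "F e = e" "F f = f"
  shows "e = f"
proof -
  have "\<Phi> e f \<le> \<pi> * \<Phi> e f"
    using contraction[OF assms(1,2)] assms(3,4) by simp
  then have "\<Phi> e f = 0"
    using pi poly_dist_nonneg[OF assms(1,2)] by (smt (verit) mult_le_cancel_right1)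
  then have "d e f \<le> 0"
    using dist_le_root_poly_dist[OF assms(1,2)] by simp
  then show ?thesis
    using dist_nonneg bipolar_metric_eq_0_iff[OF is_bipolar_metric] assms(1,2) by force
qed

theorem unique_fixed_point: "\<exists>!g. g \<in> E \<union> P \<and> F g = g"
proof -
  obtain g where g: "g \<in> E" "g \<in> P" "F g = g"
    using fixed_point_exists by blast
  show ?thesis
    by (rule ex1I[of _ g]) (use g fixed_points_eq in blast)+
qed

end

theorem corollary3p5:
  fixes E P :: "'a set" and d :: "'a \<Rightarrow> 'a \<Rightarrow> real" and F :: "'a \<Rightarrow> 'a"
    and \<pi> :: real and \<sigma> :: nat and q :: "nat \<Rightarrow> 'a \<Rightarrow> 'a \<Rightarrow> real"
  assumes complete: "complete_bipolar E P d"
    and FE: "F ` E \<subseteq> E" and FP: "F ` P \<subseteq> P"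
    and pi: "0 < \<pi>" "\<pi> < 1"
    and sigma: "\<sigma> \<ge> 1"
    and q_nonneg: "\<forall>v\<le>\<sigma>. \<forall>e\<in>E. \<forall>f\<in>P. q v e f \<ge> 0"
    and contr: "\<forall>e\<in>E. \<forall>f\<in>P.
        (\<Sum>v=0..\<sigma>. q v (F e) (F f) * d (F e) (F f) ^ v) \<le> \<pi> * (\<Sum>v=0..\<sigma>. q v e f * d e f ^ v)"
    and q0: "\<forall>e\<in>E. \<forall>f\<in>P. q 0 e f = 0"
    and bounded: "\<forall>v\<in>{1..\<sigma>}. \<exists>W>0. \<forall>e\<in>E. \<forall>f\<in>P. q v e f \<le> W"
    and lower: "\<exists>\<rho>\<in>{1..\<sigma>}. \<exists>Q>0. \<forall>e\<in>E. \<forall>f\<in>P. q \<rho> e f \<ge> Q"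
  shows "\<exists>!g. g \<in> E \<union> P \<and> F g = g"
proof -
  obtain \<rho> Q where "\<rho> \<in> {1..\<sigma>}" "Q > 0" "\<forall>e\<in>E. \<forall>f\<in>P. Q \<le> q \<rho> e f"
    using lower by blast
  moreover obtain W where "\<forall>v\<in>{1..\<sigma>}. \<forall>e\<in>E. \<forall>f\<in>P. q v e f \<le> W v"
    using bchoice[OF bounded] by blast
  ultimately interpret polynomial_contraction E P d F \<pi> \<sigma> q W \<rho> Q
    using complete FE FP pi q_nonneg contr q0 by unfold_locales (auto simp: poly_dist_def)
  show ?thesis by (rule unique_fixed_point)
qed

end
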